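(* Let $\gamma\in[0,1]$, $\theta>0$, and let $\alpha,\beta_0,\beta$ be real numbers with $\alpha\ge-1$. Suppose $$\theta\ge\max\Big\{\beta,\ \frac{|\beta_0|\gamma+\beta}{1+\sqrt{1+\alpha}}\Big\}.$$ Then for all real $z_0,z_1,z_2$ satisfying $z_1\le0$, $z_2\le0$, $z_0+z_1+z_2\le0$ and $|z_0|\le2\gamma\sqrt{z_1z_2}$, one has $$p+\alpha+\beta_0z_0+\beta(z_1+z_2)\ge0,\qquad\text{where } p=(1-\theta z_1)(1-\theta z_2).$$ *)

theory Defs
  imports Complex_Main
begin

end

theory Submission
  imports Defs
begin

(* With a = -z1, b = -z2, s = sqrt(ab) and r = sqrt(1 + alpha), AM-GM gives a + b >= 2s and the
   hypothesis on z0 gives beta0 z0 >= -2 |beta0| gamma s, so the expression is at least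
   r^2 + theta^2 s^2 + 2(theta - beta - |beta0| gamma) s = (theta s - r)^2 + 2s(theta(1 + r) - beta - |beta0| gamma),
   and both summands are nonnegative by the hypothesis on theta. *)

lemma square_sum_linear_nonneg:
  fixes \<theta> r s c :: real
  assumes "0 \<le> s" and "c \<le> \<theta> * (1 + r)"
  shows "r\<^sup>2 + \<theta>\<^sup>2 * s\<^sup>2 + 2 * (\<theta> - c) * s \<ge> 0"
proof -
  have "r\<^sup>2 + \<theta>\<^sup>2 * s\<^sup>2 + 2 * (\<theta> - c) * s = (\<theta> * s - r)\<^sup>2 + 2 * s * (\<theta> * (1 + r) - c)"
    by (simp add: power2_eq_square algebra_simps)
  moreover have "0 \<le> 2 * s * (\<theta> * (1 + r) - c)"
    using assms by simp
  ultimately show ?thesis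
    by (metis add_nonneg_nonneg zero_le_power2)
qed

lemma perturbed_product_nonneg:
  fixes \<theta> \<alpha> \<beta> \<delta> a b w :: real
  assumes "0 \<le> a" and "0 \<le> b" and "\<alpha> \<ge> -1" and "\<beta> \<le> \<theta>"
    and "\<delta> + \<beta> \<le> \<theta> * (1 + sqrt (1 + \<alpha>))"
    and "\<bar>w\<bar> \<le> 2 * \<delta> * sqrt (a * b)"
  shows "(1 + \<theta> * a) * (1 + \<theta> * b) + \<alpha> + w - \<beta> * (a + b) \<ge> 0"
proof -
  define s where "s = sqrt (a * b)"
  define r where "r = sqrt (1 + \<alpha>)"
  have s_nonneg: "0 \<le> s" and s_sq: "s\<^sup>2 = a * b"
    using assms(1,2) by (simp_all add: s_def)
  have r_sq: "r\<^sup>2 = 1 + \<alpha>"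
    using assms(3) by (simp add: r_def)
  have am_gm: "2 * s \<le> a + b"
    using arith_geo_mean_sqrt[OF assms(1,2)] by (simp add: s_def)
  have "(1 + \<theta> * a) * (1 + \<theta> * b) + \<alpha> + w - \<beta> * (a + b)
      = r\<^sup>2 + \<theta>\<^sup>2 * s\<^sup>2 + (\<theta> - \<beta>) * (a + b) + w"
    unfolding r_sq s_sq by (simp add: power2_eq_square algebra_simps)
  also have "\<dots> \<ge> r\<^sup>2 + \<theta>\<^sup>2 * s\<^sup>2 + (\<theta> - \<beta>) * (2 * s) - 2 * \<delta> * s"
    using mult_left_mono[OF am_gm, of "\<theta> - \<beta>"] assms(4,6) by (simp add: s_def)
  also have "r\<^sup>2 + \<theta>\<^sup>2 * s\<^sup>2 + (\<theta> - \<beta>) * (2 * s) - 2 * \<delta> * s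
      = r\<^sup>2 + \<theta>\<^sup>2 * s\<^sup>2 + 2 * (\<theta> - (\<delta> + \<beta>)) * s"
    by (simp add: algebra_simps)
  finally show ?thesis
    using square_sum_linear_nonneg[OF s_nonneg, of "\<delta> + \<beta>" \<theta> r] assms(5)
    by (simp add: r_def)
qed

theorem lemma1:
  fixes \<gamma> \<theta> \<alpha> \<beta>\<^sub>0 \<beta> :: real
  assumes "0 \<le> \<gamma>" and "\<gamma> \<le> 1" and "\<theta> > 0" and "\<alpha> \<ge> -1"
    and "\<theta> \<ge> max \<beta> ((\<bar>\<beta>\<^sub>0\<bar> * \<gamma> + \<beta>) / (1 + sqrt (1 + \<alpha>)))"
  shows "\<forall>z0 z1 z2 :: real. z1 \<le> 0 \<longrightarrow> z2 \<le> 0 \<longrightarrow> z0 + z1 + z2 \<le> 0 \<longrightarrow>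
           \<bar>z0\<bar> \<le> 2 * \<gamma> * sqrt (z1 * z2) \<longrightarrow>
           (let p = (1 - \<theta> * z1) * (1 - \<theta> * z2) in p + \<alpha> + \<beta>\<^sub>0 * z0 + \<beta> * (z1 + z2) \<ge> 0)"
proof (intro allI impI)
  fix z0 z1 z2 :: real
  assume "z1 \<le> 0" and "z2 \<le> 0" and "\<bar>z0\<bar> \<le> 2 * \<gamma> * sqrt (z1 * z2)"
  have "\<bar>\<beta>\<^sub>0 * z0\<bar> \<le> 2 * (\<bar>\<beta>\<^sub>0\<bar> * \<gamma>) * sqrt ((- z1) * (- z2))"
    using mult_left_mono[OF \<open>\<bar>z0\<bar> \<le> _\<close>, of "\<bar>\<beta>\<^sub>0\<bar>"] by (simp add: abs_mult mult_ac)
  moreover have "\<bar>\<beta>\<^sub>0\<bar> * \<gamma> + \<beta> \<le> \<theta> * (1 + sqrt (1 + \<alpha>))"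
  proof -
    have "0 < 1 + sqrt (1 + \<alpha>)"
      using assms(4) real_sqrt_ge_zero[of "1 + \<alpha>"] by linarith
    then show ?thesis
      using assms(5) by (simp add: pos_divide_le_eq mult.commute)
  qed
  ultimately have "(1 + \<theta> * (- z1)) * (1 + \<theta> * (- z2)) + \<alpha> + \<beta>\<^sub>0 * z0 - \<beta> * ((- z1) + (- z2)) \<ge> 0"
    using \<open>z1 \<le> 0\<close> \<open>z2 \<le> 0\<close> assms(4,5)
    by (intro perturbed_product_nonneg) auto
  then show "let p = (1 - \<theta> * z1) * (1 - \<theta> * z2) in p + \<alpha> + \<beta>\<^sub>0 * z0 + \<beta> * (z1 + z2) \<ge> 0"
    by (simp add: Let_def algebra_simps)
qed

end
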